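(* Let $P_1,Q_1\in GL(2,\mathbb R)$, where $P_1$ has the pair of complex conjugate eigenvalues $\cos\alpha\pm i\sin\alpha$ with $\alpha\in(-\pi/2,\pi/2]$ and $\alpha/\pi\notin\mathbb Q$. If $f\colon\overline{\mathbb R}\to\overline{\mathbb R}$ is a homeomorphism with $f(P_1(x))=Q_1(f(x))$ for all $x\in\overline{\mathbb R}$, then $f$ is a nondegenerate linear-fractional transformation, i.e. $f(x)=\frac{ax+b}{cx+d}$ for some real $a,b,c,d$ with $ad-bc\neq0$.
   Context: $\overline{\mathbb R}=\mathbb R\cup\{\infty\}$. A matrix $\begin{pmatrix}a&b\\c&d\end{pmatrix}\in GL(2,\mathbb R)$ acts on $\overline{\mathbb R}$ by $x\mapsto\frac{ax+b}{cx+d}$. *)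

theory Defs
  imports "HOL-Analysis.Analysis"
begin

datatype rbar = Fin real | Infty

definition rbar_open :: "rbar set \<Rightarrow> bool" where
  "rbar_open U \<longleftrightarrow> open {x. Fin x \<in> U} \<and>
     (Infty \<in> U \<longrightarrow> (\<exists>M. \<forall>x. \<bar>x\<bar> > M \<longrightarrow> Fin x \<in> U))"

lemma istopology_rbar_open: "istopology rbar_open"
  unfolding istopology_def
proof (intro conjI allI impI)
  fix S T :: "rbar set" assume S: "rbar_open S" and T: "rbar_open T"
  note ST = S T
  have "{x. Fin x \<in> S \<inter> T} = {x. Fin x \<in> S} \<inter> {x. Fin x \<in> T}" by auto
  then have o: "open {x. Fin x \<in> S \<inter> T}" using ST by (simp add: rbar_open_def open_Int)
  have "\<exists>M. \<forall>x. \<bar>x\<bar> > M \<longrightarrow> Fin x \<in> S \<inter> T" if inf: "Infty \<in> S \<inter> T"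
  proof -
    obtain M1 where "\<forall>x. \<bar>x\<bar> > M1 \<longrightarrow> Fin x \<in> S" using ST inf unfolding rbar_open_def by blast
    moreover obtain M2 where "\<forall>x. \<bar>x\<bar> > M2 \<longrightarrow> Fin x \<in> T" using ST inf unfolding rbar_open_def by blast
    ultimately have "\<forall>x. \<bar>x\<bar> > max M1 M2 \<longrightarrow> Fin x \<in> S \<inter> T" by simp
    then show ?thesis by blast
  qed
  then show "rbar_open (S \<inter> T)" using o unfolding rbar_open_def by blast
next
  fix K :: "rbar set set" assume K: "\<forall>S\<in>K. rbar_open S"
  have "{x. Fin x \<in> \<Union>K} = (\<Union>S\<in>K. {x. Fin x \<in> S})" by auto
  moreover have "open (\<Union>S\<in>K. {x. Fin x \<in> S})" using K by (auto simp: rbar_open_def)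
  ultimately show "rbar_open (\<Union>K)" using K unfolding rbar_open_def by (metis UnionE UnionI)
qed

definition rbar_top :: "rbar topology" where
  "rbar_top = topology rbar_open"

fun lft :: "real \<Rightarrow> real \<Rightarrow> real \<Rightarrow> real \<Rightarrow> rbar \<Rightarrow> rbar" where
  "lft a b c d (Fin x) = (if c * x + d = 0 then Infty else Fin ((a * x + b) / (c * x + d)))"
| "lft a b c d Infty = (if c = 0 then Infty else Fin (a / c))"

definition mat_act :: "real^2^2 \<Rightarrow> rbar \<Rightarrow> rbar" where
  "mat_act P = lft (P$1$1) (P$1$2) (P$2$1) (P$2$2)"

definition complex_eigenvalue :: "real^2^2 \<Rightarrow> complex \<Rightarrow> bool" where
  "complex_eigenvalue P z \<longleftrightarrow>
     (\<exists>v::complex^2. v \<noteq> 0 \<and> (\<chi> i j. complex_of_real (P$i$j)) *v v = z *s v)"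

end

theory Submission
  imports Defs
begin

text \<open>
  Writing points in homogeneous coordinates, the projective line is the circle
  \<open>\<real> / \<pi>\<int>\<close> via \<open>t \<mapsto> (cos t : sin t)\<close>, on which rotation matrices act as translations.
  The proof proceeds in four steps.
  (1) Linear-fractional maps form a group of homeomorphisms (homogeneous coordinates).
  (2) A real matrix with eigenvalue \<open>e^{i \<alpha>}\<close>, \<open>\<alpha> / \<pi>\<close> irrational, is elliptic and conjugate
      by a linear-fractional map to the rotation by some \<open>\<theta> \<in> (0, \<pi>)\<close>, \<open>\<theta> / \<pi> \<notin> \<rat>\<close>.  Its
      topological conjugate \<open>Q1\<close> is fixed-point free, hence also elliptic and conjugate to a
      rotation by some \<open>\<psi> \<in> (0, \<pi>)\<close>.
  (3) A homeomorphism \<open>h\<close> conjugating these rotations is, after composing with a rotation,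
      a map fixing \<open>\<infinity>\<close> which is monotone on the real line.  Its lift to \<open>\<real>\<close> conjugates
      translation by \<open>\<theta>\<close> to translation by \<open>\<psi>\<close>; bounded displacement forces \<open>\<psi> = \<theta>\<close>, and
      then the lift fixes the dense orbit \<open>n \<theta> + j \<pi>\<close> (Kronecker), so it is the identity.
      Thus \<open>h\<close> is a rotation, possibly composed with \<open>x \<mapsto> -x\<close>.
  (4) \<open>f\<close> is \<open>h\<close> conjugated back by linear-fractional maps, hence linear-fractional.
\<close>

section \<open>Linear-fractional maps in homogeneous coordinates\<close>

definition proj :: "real \<Rightarrow> real \<Rightarrow> rbar" where
  "proj x y = (if y = 0 then Infty else Fin (x / y))"

lemma proj_surj: "\<exists>x y. (x \<noteq> 0 \<or> y \<noteq> 0) \<and> p = proj x y"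
proof (cases p)
  case (Fin t) then show ?thesis by (intro exI[of _ t] exI[of _ 1]) (simp add: proj_def)
next
  case Infty then show ?thesis by (intro exI[of _ 1] exI[of _ 0]) (simp add: proj_def)
qed

lemma proj_scale: "k \<noteq> 0 \<Longrightarrow> proj (k * x) (k * y) = proj x y"
  by (simp add: proj_def)

lemma nonsingular_image_nonzero:
  fixes a b c d x y :: real
  assumes "a * d - b * c \<noteq> 0" "x \<noteq> 0 \<or> y \<noteq> 0"
  shows "a * x + b * y \<noteq> 0 \<or> c * x + d * y \<noteq> 0"
proof -
  have "(a * d - b * c) * x = d * (a * x + b * y) - b * (c * x + d * y)"
       "(a * d - b * c) * y = a * (c * x + d * y) - c * (a * x + b * y)" by algebra+
  then show ?thesis using assms by auto
qed

lemma lft_proj: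
  assumes "a * d - b * c \<noteq> 0" "x \<noteq> 0 \<or> y \<noteq> 0"
  shows "lft a b c d (proj x y) = proj (a * x + b * y) (c * x + d * y)"
proof (cases "y = 0")
  case False
  have "a * (x / y) + b = (a * x + b * y) / y" "c * (x / y) + d = (c * x + d * y) / y"
    using False by (auto simp: field_simps)
  then show ?thesis using False by (simp add: proj_def)
qed (use assms in \<open>auto simp: proj_def\<close>)

lemma lft_comp:
  assumes "a * d - b * c \<noteq> 0" "a' * d' - b' * c' \<noteq> 0"
  shows "lft a b c d (lft a' b' c' d' p) =
     lft (a * a' + b * c') (a * b' + b * d') (c * a' + d * c') (c * b' + d * d') p"
proof -
  obtain x y where xy: "x \<noteq> 0 \<or> y \<noteq> 0" "p = proj x y" using proj_surj by blast
  have det: "(a * a' + b * c') * (c * b' + d * d') - (a * b' + b * d') * (c * a' + d * c')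
      = (a * d - b * c) * (a' * d' - b' * c')" by algebra
  have "lft a b c d (lft a' b' c' d' p)
      = proj (a * (a' * x + b' * y) + b * (c' * x + d' * y)) (c * (a' * x + b' * y) + d * (c' * x + d' * y))"
    using xy assms nonsingular_image_nonzero[OF assms(2) xy(1)] by (simp add: lft_proj)
  also have "\<dots> = proj ((a * a' + b * c') * x + (a * b' + b * d') * y)
                        ((c * a' + d * c') * x + (c * b' + d * d') * y)"
    by (simp add: algebra_simps)
  also have "\<dots> = lft (a * a' + b * c') (a * b' + b * d') (c * a' + d * c') (c * b' + d * d') p"
    using xy assms det by (simp add: lft_proj)
  finally show ?thesis .
qed

lemma lft_scale:
  assumes "k \<noteq> 0"
  shows "lft (k * a) (k * b) (k * c) (k * d) = lft a b c d"
proof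
  fix p show "lft (k * a) (k * b) (k * c) (k * d) p = lft a b c d p"
  proof (cases p)
    case (Fin x)
    have "k * c * x + k * d = k * (c * x + d)" "k * a * x + k * b = k * (a * x + b)" by algebra+
    then show ?thesis using Fin assms by simp
  qed (use assms in simp)
qed

definition is_lft :: "(rbar \<Rightarrow> rbar) \<Rightarrow> bool" where
  "is_lft g \<longleftrightarrow> (\<exists>a b c d. a * d - b * c \<noteq> 0 \<and> g = lft a b c d)"

lemma lft_id: "lft 1 0 0 1 = id"
proof
  fix p show "lft 1 0 0 1 p = id p" by (cases p) auto
qed

lemma is_lft_id: "is_lft id"
  unfolding is_lft_def by (intro exI[of _ 1] exI[of _ 0]) (simp add: lft_id)

lemma is_lft_comp:
  assumes "is_lft g" "is_lft h"
  shows "is_lft (g \<circ> h)"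
proof -
  obtain a b c d where g: "a * d - b * c \<noteq> 0" "g = lft a b c d"
    using assms(1) is_lft_def by auto
  obtain a' b' c' d' where h: "a' * d' - b' * c' \<noteq> 0" "h = lft a' b' c' d'"
    using assms(2) is_lft_def by auto
  have "(a * a' + b * c') * (c * b' + d * d') - (a * b' + b * d') * (c * a' + d * c')
      = (a * d - b * c) * (a' * d' - b' * c')" by algebra
  moreover have "g \<circ> h = lft (a * a' + b * c') (a * b' + b * d') (c * a' + d * c') (c * b' + d * d')"
    using g h by (auto simp: lft_comp)
  ultimately show ?thesis unfolding is_lft_def using g(1) h(1) by (metis no_zero_divisors)
qed

text \<open>Linear-fractional maps form a group: the inverse comes from the adjugate matrix.\<close>
lemma is_lft_inverse:
  assumes "is_lft g"
  obtains g' where "is_lft g'" "\<And>x. g' (g x) = x" "\<And>x. g (g' x) = x"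
proof -
  obtain a b c d where g: "a * d - b * c \<noteq> 0" "g = lft a b c d"
    using assms is_lft_def by auto
  let ?D = "a * d - b * c"
  have "lft d (-b) (-c) a (lft a b c d x) = lft (?D * 1) (?D * 0) (?D * 0) (?D * 1) x"
       "lft a b c d (lft d (-b) (-c) a x) = lft (?D * 1) (?D * 0) (?D * 0) (?D * 1) x" for x
    using g by (simp_all add: lft_comp algebra_simps)
  moreover have "lft (?D * 1) (?D * 0) (?D * 0) (?D * 1) = id"
    using g lft_scale[of ?D 1 0 0 1] by (simp add: lft_id)
  moreover have "is_lft (lft d (-b) (-c) a)"
    unfolding is_lft_def using g(1)
    by (intro exI[of _ d] exI[of _ "-b"] exI[of _ "-c"] exI[of _ a]) (auto simp: algebra_simps)
  ultimately show thesis using that[of "lft d (-b) (-c) a"] g by auto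
qed

lemma is_lft_inj: "is_lft g \<Longrightarrow> inj g"
  by (metis injI is_lft_inverse)

section \<open>Continuity of linear-fractional maps\<close>

lemma openin_rbar: "openin rbar_top = rbar_open"
  unfolding rbar_top_def by (simp add: istopology_rbar_open)

lemma topspace_rbar: "topspace rbar_top = UNIV"
proof -
  have "rbar_open UNIV" unfolding rbar_open_def by simp
  then show ?thesis unfolding topspace_def openin_rbar by auto
qed

text \<open>A set is open in \<open>rbar_top\<close> iff its cone is open in the plane, i.e. \<open>rbar_top\<close> is the
  quotient topology of the punctured plane.\<close>
definition hcone :: "rbar set \<Rightarrow> (real \<times> real) set" where
  "hcone U = {v. v \<noteq> 0 \<and> proj (fst v) (snd v) \<in> U}"

lemma open_ratio_vimage:
  assumes "open V"
  shows "open {w :: real \<times> real. snd w \<noteq> 0 \<and> fst w / snd w \<in> V}"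
proof -
  have "continuous_on {w :: real \<times> real. snd w \<noteq> 0} (\<lambda>w. fst w / snd w)"
    by (intro continuous_intros) auto
  moreover have "open {w :: real \<times> real. snd w \<noteq> 0}"
    by (intro open_Collect_neq continuous_intros)
  ultimately have "open ((\<lambda>w. fst w / snd w) -` V \<inter> {w :: real \<times> real. snd w \<noteq> 0})"
    using assms continuous_on_open_vimage by blast
  moreover have "(\<lambda>w. fst w / snd w) -` V \<inter> {w. snd w \<noteq> 0}
      = {w :: real \<times> real. snd w \<noteq> 0 \<and> fst w / snd w \<in> V}" by auto
  ultimately show ?thesis by simp
qed

lemma hcone_sector_decomposition:
  assumes M: "\<And>x. Infty \<in> U \<Longrightarrow> \<bar>x\<bar> > M \<Longrightarrow> Fin x \<in> U"
  shows "hcone U = {w. snd w \<noteq> 0 \<and> fst w / snd w \<in> {t. Fin t \<in> U}} \<union>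
                   {w. Infty \<in> U \<and> \<bar>snd w\<bar> * (\<bar>M\<bar> + 1) < \<bar>fst w\<bar>}"
    (is "_ = ?S1 \<union> ?S2")
proof (intro set_eqI iffI)
  fix w :: "real \<times> real"
  obtain x y where w: "w = (x, y)" by force
  {
    assume "w \<in> hcone U"
    then show "w \<in> ?S1 \<union> ?S2"
      using w by (cases "y = 0") (auto simp: hcone_def proj_def zero_prod_def)
  next
    assume "w \<in> ?S1 \<union> ?S2"
    then consider "w \<in> ?S1" | "Infty \<in> U" "\<bar>y\<bar> * (\<bar>M\<bar> + 1) < \<bar>x\<bar>"
      using w by auto
    then show "w \<in> hcone U"
    proof cases
      case 2
      then have "x \<noteq> 0"
        by (metis abs_ge_zero abs_zero add_nonneg_nonneg leD mult_nonneg_nonneg zero_le_one)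
      moreover have "proj x y \<in> U"
      proof (cases "y = 0")
        case False
        then have "\<bar>x / y\<bar> > \<bar>M\<bar> + 1" using 2 by (simp add: field_simps)
        then show ?thesis using M[OF 2(1), of "x / y"] False by (simp add: proj_def)
      qed (use 2 in \<open>simp add: proj_def\<close>)
      ultimately show ?thesis using w by (simp add: hcone_def zero_prod_def)
    qed (auto simp: hcone_def proj_def)
  }
qed

lemma open_hcone:
  assumes "rbar_open U"
  shows "open (hcone U)"
proof -
  obtain M where M: "\<And>x. Infty \<in> U \<Longrightarrow> \<bar>x\<bar> > M \<Longrightarrow> Fin x \<in> U"
    using assms unfolding rbar_open_def by blast
  define S1 where "S1 = {w :: real \<times> real. snd w \<noteq> 0 \<and> fst w / snd w \<in> {t. Fin t \<in> U}}"
  define S2 where "S2 = {w :: real \<times> real. Infty \<in> U \<and> \<bar>snd w\<bar> * (\<bar>M\<bar> + 1) < \<bar>fst w\<bar>}"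
  have "open S1" unfolding S1_def
    using assms by (intro open_ratio_vimage) (simp add: rbar_open_def)
  moreover have "open S2"
  proof (cases "Infty \<in> U")
    case True
    then show ?thesis unfolding S2_def by simp (intro open_Collect_less continuous_intros)
  qed (simp add: S2_def)
  moreover have "hcone U = S1 \<union> S2"
    unfolding S1_def S2_def using M by (rule hcone_sector_decomposition)
  ultimately show ?thesis by auto
qed

text \<open>Conversely, \<open>U\<close> is open if its cone is: its finite part is the slice \<open>y = 1\<close> of the
  cone, and a neighbourhood of \<open>(1, 0)\<close> in the cone yields a neighbourhood of \<open>\<infinity>\<close>.\<close>
lemma rbar_open_if_open_hcone:
  assumes "open (hcone U)"
  shows "rbar_open U"
proof -
  have "open ((\<lambda>t::real. (t, 1::real)) -` hcone U)"
    by (rule open_vimage[OF assms]) (intro continuous_intros)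
  moreover have "(\<lambda>t::real. (t, 1::real)) -` hcone U = {t. Fin t \<in> U}"
    by (auto simp: hcone_def proj_def zero_prod_def)
  moreover have "\<exists>M. \<forall>x. \<bar>x\<bar> > M \<longrightarrow> Fin x \<in> U" if "Infty \<in> U"
  proof -
    have "(1, 0) \<in> hcone U" using that by (simp add: hcone_def proj_def zero_prod_def)
    then obtain e where e: "e > 0" "\<And>w. dist w (1, 0) < e \<Longrightarrow> w \<in> hcone U"
      using assms unfolding open_dist by blast
    have "Fin x \<in> U" if x: "\<bar>x\<bar> > 1 / e" for x
    proof -
      have x0: "x \<noteq> 0" using x e by auto
      have "dist (1, 1 / x) (1 :: real, 0 :: real) = \<bar>1 / x\<bar>"
        by (simp add: dist_Pair_Pair dist_real_def)
      also have "\<dots> < e" using x e x0 by (simp add: field_simps)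
      finally have "(1, 1 / x) \<in> hcone U" using e by blast
      then show ?thesis using x0 by (simp add: hcone_def proj_def zero_prod_def)
    qed
    then show ?thesis by blast
  qed
  ultimately show ?thesis unfolding rbar_open_def by auto
qed

text \<open>The cone over \<open>lft a b c d -` U\<close> is the preimage of the cone over \<open>U\<close> under the
  (continuous) linear map of the matrix.\<close>
lemma rbar_open_lft_vimage:
  assumes U: "rbar_open U" and det: "a * d - b * c \<noteq> 0"
  shows "rbar_open (lft a b c d -` U)"
proof -
  define L where "L = (\<lambda>v :: real \<times> real. (a * fst v + b * snd v, c * fst v + d * snd v))"
  have "hcone (lft a b c d -` U) = L -` hcone U"
  proof (rule set_eqI)
    fix v :: "real \<times> real"
    obtain x y where v: "v = (x, y)" by force
    show "v \<in> hcone (lft a b c d -` U) \<longleftrightarrow> v \<in> L -` hcone U"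
    proof (cases "x = 0 \<and> y = 0")
      case False
      then show ?thesis using nonsingular_image_nonzero[OF det, of x y] det
        by (auto simp: v L_def hcone_def zero_prod_def lft_proj)
    qed (auto simp: v L_def hcone_def zero_prod_def)
  qed
  moreover have "continuous_on UNIV L" unfolding L_def by (intro continuous_intros)
  ultimately show ?thesis
    using open_hcone[OF U] by (metis open_vimage rbar_open_if_open_hcone)
qed

lemma is_lft_continuous: "is_lft g \<Longrightarrow> continuous_map rbar_top rbar_top g"
  unfolding continuous_map topspace_rbar openin_rbar is_lft_def
  using rbar_open_lft_vimage by (auto simp: vimage_def)

section \<open>Angular coordinate and rotations\<close>

text \<open>The projective line is the circle \<open>\<real> / \<pi>\<int>\<close>: the angle \<open>t\<close> corresponds to the line
  spanned by \<open>(cos t, sin t)\<close>, and the rotation matrices act on it by translation.\<close>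
definition ang :: "real \<Rightarrow> rbar" where
  "ang t = proj (cos t) (sin t)"

definition rot :: "real \<Rightarrow> rbar \<Rightarrow> rbar" where
  "rot t = lft (cos t) (- sin t) (sin t) (cos t)"

lemma cos_sin_nonzero: "cos (t :: real) \<noteq> 0 \<or> sin t \<noteq> 0"
  using sin_cos_squared_add[of t] by (auto simp: power2_eq_square)

lemma rot_det: "cos (t :: real) * cos t - (- sin t) * sin t \<noteq> 0"
  using sin_cos_squared_add[of t] by (simp add: power2_eq_square)

lemma is_lft_rot: "is_lft (rot t)"
  unfolding is_lft_def rot_def using rot_det by blast

lemma rot_ang: "rot t (ang s) = ang (s + t)"
  unfolding rot_def ang_def using cos_sin_nonzero[of s] rot_det[of t]
  by (simp add: lft_proj cos_add sin_add algebra_simps)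

lemma ang_period: "ang (t + of_int m * pi) = ang t"
proof -
  have s: "sin (of_int m * pi) = 0" by (simp add: sin_zero_iff_int2)
  then have "cos (of_int m * pi) \<noteq> 0" using cos_sin_nonzero by blast
  moreover have "ang (t + of_int m * pi) = proj (cos (of_int m * pi) * cos t) (cos (of_int m * pi) * sin t)"
    unfolding ang_def by (simp add: cos_add sin_add s algebra_simps)
  ultimately show ?thesis unfolding ang_def by (simp add: proj_scale)
qed

lemma ang_eq_imp: "ang s = ang t \<Longrightarrow> \<exists>m::int. s = t + of_int m * pi"
proof -
  assume E: "ang s = ang t"
  have "sin s = 0 \<longleftrightarrow> sin t = 0" using E unfolding ang_def proj_def by (auto split: if_splits)
  moreover have "sin s \<noteq> 0 \<Longrightarrow> cos s * sin t = cos t * sin s"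
    using E unfolding ang_def proj_def by (auto simp: field_simps split: if_splits)
  ultimately have "sin (s - t) = 0" by (auto simp: sin_diff)
  then obtain m :: int where "s - t = of_int m * pi" using sin_zero_iff_int2 by metis
  then show ?thesis by (intro exI[of _ m]) simp
qed

fun rbar_angle :: "rbar \<Rightarrow> real" where
  "rbar_angle (Fin y) = pi / 2 - arctan y"
| "rbar_angle Infty = 0"

lemma rbar_angle_range: "0 \<le> rbar_angle p \<and> rbar_angle p < pi"
proof (cases p)
  case (Fin y) then show ?thesis using arctan_bounded[of y] by auto
qed simp

lemma ang_rbar_angle: "ang (rbar_angle p) = p"
proof (cases p)
  case (Fin y)
  have "cos (pi / 2 - arctan y) = sin (arctan y)" "sin (pi / 2 - arctan y) = cos (arctan y)"
    by (simp_all add: cos_diff sin_diff)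
  then show ?thesis using Fin tan_arctan[of y] by (simp add: ang_def proj_def tan_def)
qed (simp add: ang_def proj_def)

lemma ang_surj: "\<exists>t. p = ang t"
  by (metis ang_rbar_angle)

lemma ang_cot: "0 < t \<Longrightarrow> t < pi \<Longrightarrow> ang t = Fin (cot t)"
  using sin_gt_zero[of t] unfolding ang_def proj_def cot_def by simp

lemma fun_eq_on_ang: "(\<And>t. g (ang t) = g' (ang t)) \<Longrightarrow> g = g'"
  by (metis ang_surj ext)

lemma rot_add: "rot s (rot t p) = rot (s + t) p"
  using ang_surj[of p] by (auto simp: rot_ang algebra_simps)

lemma rot_zero: "rot 0 = id"
  by (simp add: rot_def lft_id)

lemma rot_period: "rot (t + of_int m * pi) = rot t"
  by (rule fun_eq_on_ang) (simp add: rot_ang ang_period flip: add.assoc)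

lemma floor_remainder:
  fixes p t :: real
  assumes "p > 0"
  shows "0 \<le> t - \<lfloor>t / p\<rfloor> * p \<and> t - \<lfloor>t / p\<rfloor> * p < p"
proof -
  have "t - \<lfloor>t / p\<rfloor> * p = p * frac (t / p)" using assms by (simp add: frac_def field_simps)
  then show ?thesis using assms frac_lt_1[of "t / p"] by simp
qed

lemma rot_normalize:
  assumes "sin \<beta> \<noteq> 0"
  obtains \<theta> m where "0 < \<theta>" "\<theta> < pi" "rot \<theta> = rot \<beta>" "\<theta> = \<beta> + of_int m * pi"
proof -
  define m where "m = - \<lfloor>\<beta> / pi\<rfloor>"
  have "0 \<le> \<beta> + m * pi" "\<beta> + m * pi < pi"
    using floor_remainder[OF pi_gt_zero, of \<beta>] unfolding m_def by simp_all
  moreover have "\<beta> + m * pi \<noteq> 0"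
    using assms sin_zero_iff_int2 by (metis add_eq_0_iff2 mult_minus_left of_int_minus)
  ultimately show thesis using that[of "\<beta> + m * pi" m] rot_period by fastforce
qed

definition reflect :: "rbar \<Rightarrow> rbar" where
  "reflect = lft (-1) 0 0 1"

lemma is_lft_reflect: "is_lft reflect"
  unfolding is_lft_def reflect_def by force

lemma reflect_simps [simp]: "reflect (Fin x) = Fin (- x)" "reflect Infty = Infty" "reflect (reflect p) = p"
  by (cases p; simp add: reflect_def)+

lemma reflect_ang: "reflect (ang t) = ang (- t)"
proof -
  have "reflect (ang t) = proj (-1 * cos t) (-1 * (- sin t))"
    unfolding reflect_def ang_def using cos_sin_nonzero[of t] by (simp add: lft_proj)
  also have "\<dots> = ang (- t)" unfolding ang_def by (subst proj_scale) auto
  finally show ?thesis .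
qed

lemma reflect_rot: "reflect (rot s p) = rot (- s) (reflect p)"
  using ang_surj[of p] by (auto simp: rot_ang reflect_ang algebra_simps)

section \<open>Rigidity of monotone lifts of circle maps\<close>

lemma translation_conj_orbit:
  fixes H :: "real \<Rightarrow> real"
  assumes "H 0 = 0" and step: "\<And>t. H (t + \<theta>) = H t + \<psi>"
  shows "H (of_nat n * \<theta>) = of_nat n * \<psi>"
proof (induction n)
  case (Suc n)
  then show ?case using step[of "of_nat n * \<theta>"] by (simp add: distrib_right add.commute)
qed (simp add: \<open>H 0 = 0\<close>)

lemma lift_displacement_bound:
  fixes H :: "real \<Rightarrow> real"
  assumes "mono H" "H 0 = 0" "p > 0"
    and per: "\<And>t j. H (t + of_int j * p) = H t + of_int j * p"
  shows "\<bar>H t - t\<bar> \<le> p"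
proof -
  define r where "r = t - \<lfloor>t / p\<rfloor> * p"
  have r: "0 \<le> r" "r < p" using floor_remainder[OF \<open>p > 0\<close>] r_def by auto
  have "H t = H r + \<lfloor>t / p\<rfloor> * p" using per[of r "\<lfloor>t / p\<rfloor>"] by (simp add: r_def)
  moreover have "H 0 \<le> H r" "H r \<le> H (0 + of_int 1 * p)"
    using r \<open>mono H\<close> by (simp_all add: monoD)
  ultimately show ?thesis using r per[of 0 1] \<open>H 0 = 0\<close> by (simp add: r_def abs_le_iff)
qed

text \<open>If \<open>H\<close> conjugates the translation by \<open>\<theta>\<close> to the translation by \<open>\<psi>\<close>, then the two
  translation lengths agree (their difference would accumulate along the orbit of \<open>0\<close>).\<close>
lemma lift_conj_translation_eq:
  fixes H :: "real \<Rightarrow> real"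
  assumes "mono H" "H 0 = 0" "p > 0"
    and per: "\<And>t j. H (t + of_int j * p) = H t + of_int j * p"
    and step: "\<And>t. H (t + \<theta>) = H t + \<psi>"
  shows "\<psi> = \<theta>"
proof (rule ccontr)
  have orbit: "H (of_nat n * \<theta>) = of_nat n * \<psi>" for n
    using translation_conj_orbit[of H \<theta> \<psi>] step \<open>H 0 = 0\<close> by blast
  assume "\<psi> \<noteq> \<theta>"
  then obtain n :: nat where "p < of_nat n * \<bar>\<psi> - \<theta>\<bar>"
    using reals_Archimedean3[of "\<bar>\<psi> - \<theta>\<bar>"] by auto
  also have "of_nat n * \<bar>\<psi> - \<theta>\<bar> = \<bar>H (of_nat n * \<theta>) - of_nat n * \<theta>\<bar>"
    by (simp add: orbit abs_mult flip: right_diff_distrib)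
  also have "\<dots> \<le> p" using lift_displacement_bound[OF assms(1-3) per] .
  finally show False by simp
qed

lemma mono_dense_fixed_points_id:
  fixes H :: "real \<Rightarrow> real"
  assumes "mono H" and dense: "\<And>a b. a < b \<Longrightarrow> \<exists>q. a < q \<and> q < b \<and> H q = q"
  shows "H t = t"
proof (rule ccontr)
  assume "H t \<noteq> t"
  then consider "t < H t" | "H t < t" by linarith
  then show False
  proof cases
    case 1
    then obtain q where "t < q" "q < H t" "H q = q" using dense by blast
    then show False using monoD[OF \<open>mono H\<close>, of t q] by simp
  next
    case 2
    then obtain q where "H t < q" "q < t" "H q = q" using dense by blast
    then show False using monoD[OF \<open>mono H\<close>, of q t] by simp
  qed
qed

text \<open>A lift commuting with an irrational translation \<open>\<theta>\<close> is the identity: it fixes the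
  orbit \<open>n \<theta> + j p\<close> of \<open>0\<close>, which is dense by Kronecker's theorem.\<close>
lemma lift_commuting_irrational_translation_id:
  fixes H :: "real \<Rightarrow> real"
  assumes "mono H" "H 0 = 0" "p > 0"
    and per: "\<And>t j. H (t + of_int j * p) = H t + of_int j * p"
    and step: "\<And>t. H (t + \<theta>) = H t + \<theta>"
    and irr: "\<theta> / p \<notin> \<rat>"
  shows "H t = t"
  using \<open>mono H\<close>
proof (rule mono_dense_fixed_points_id)
  have orbit: "H (of_nat n * \<theta>) = of_nat n * \<theta>" for n
    using translation_conj_orbit[of H \<theta> \<theta>] step \<open>H 0 = 0\<close> by blast
  fix a b :: real assume "a < b"
  then obtain j k :: int where "k > 0" and
    kron: "\<bar>of_int k * (\<theta> / p) - of_int j - (a + b) / (2 * p)\<bar> < (b - a) / (2 * p)"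
    using sequence_of_fractional_parts_is_dense[OF irr] \<open>p > 0\<close>
    by (metis divide_pos_pos diff_gt_0_iff_gt mult_pos_pos zero_less_numeral)
  define q where "q = of_nat (nat k) * \<theta> + of_int (- j) * p"
  have "q - (a + b) / 2 = p * (of_int k * (\<theta> / p) - of_int j - (a + b) / (2 * p))"
    using \<open>p > 0\<close> \<open>k > 0\<close> by (simp add: q_def field_simps)
  then have "\<bar>q - (a + b) / 2\<bar> = p * \<bar>of_int k * (\<theta> / p) - of_int j - (a + b) / (2 * p)\<bar>"
    using \<open>p > 0\<close> by (simp add: abs_mult)
  also have "\<dots> < p * ((b - a) / (2 * p))"
    using kron \<open>p > 0\<close> by (rule mult_strict_left_mono)
  also have "\<dots> = (b - a) / 2" using \<open>p > 0\<close> by simp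
  finally have "a < q \<and> q < b"
    unfolding abs_less_iff by (simp add: field_simps)
  moreover have "H q = q"
    using per[of "of_nat (nat k) * \<theta>" "- j"] orbit[of "nat k"] by (simp add: q_def)
  ultimately show "\<exists>q. a < q \<and> q < b \<and> H q = q" by blast
qed

section \<open>Maps of the projective line fixing \<open>\<infinity>\<close>\<close>

lemma real_restriction_monotone:
  assumes cont: "continuous_map rbar_top rbar_top h" and "inj h" and "h Infty = Infty"
  obtains k where "\<And>x. h (Fin x) = Fin (k x)" "strict_mono k \<or> strict_antimono_on UNIV k"
proof -
  define k where "k x = (case h (Fin x) of Fin y \<Rightarrow> y | Infty \<Rightarrow> 0)" for x
  have hk: "h (Fin x) = Fin (k x)" for x
  proof (cases "h (Fin x)")
    case Infty
    then show ?thesis using \<open>inj h\<close> \<open>h Infty = Infty\<close> by (metis injD rbar.distinct(1))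
  qed (simp add: k_def)
  have "continuous_on UNIV k"
    unfolding continuous_on_open_vimage[OF open_UNIV]
  proof (intro allI impI)
    fix B :: "real set" assume "open B"
    then have "rbar_open (Fin ` B)" unfolding rbar_open_def by (simp add: image_iff)
    then have "rbar_open {x. h x \<in> Fin ` B}"
      using cont unfolding continuous_map topspace_rbar openin_rbar by simp
    then have "open {t. h (Fin t) \<in> Fin ` B}" unfolding rbar_open_def by simp
    moreover have "{t. h (Fin t) \<in> Fin ` B} = k -` B \<inter> UNIV" by (auto simp: hk)
    ultimately show "open (k -` B \<inter> UNIV)" by simp
  qed
  moreover have "inj k" using \<open>inj h\<close> by (metis hk injD injI rbar.inject)
  ultimately have "strict_mono_on UNIV k \<or> strict_antimono_on UNIV k"
    using injective_eq_monotone_map[of UNIV k] by simp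
  then show thesis using that hk by blast
qed

definition circle_lift :: "(rbar \<Rightarrow> rbar) \<Rightarrow> real \<Rightarrow> real" where
  "circle_lift h t = rbar_angle (h (ang t)) + of_int \<lfloor>t / pi\<rfloor> * pi"

lemma ang_circle_lift: "ang (circle_lift h t) = h (ang t)"
  unfolding circle_lift_def by (simp add: ang_period ang_rbar_angle)

lemma circle_lift_shift: "circle_lift h (t + of_int j * pi) = circle_lift h t + of_int j * pi"
proof -
  have "\<lfloor>(t + of_int j * pi) / pi\<rfloor> = \<lfloor>t / pi\<rfloor> + j" by (simp add: add_divide_distrib)
  then show ?thesis unfolding circle_lift_def ang_period by (simp add: algebra_simps)
qed

lemma ang_zero: "ang 0 = Infty"
  by (simp add: ang_def proj_def)

lemma circle_lift_zero: "h Infty = Infty \<Longrightarrow> circle_lift h 0 = 0"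
  by (simp add: circle_lift_def ang_zero)

lemma cot_strict_decreasing: "0 < a \<Longrightarrow> a < b \<Longrightarrow> b < pi \<Longrightarrow> cot b < cot a"
  using tan_monotone[of "pi/2 - b" "pi/2 - a"] by (simp add: tan_cot')

text \<open>If \<open>h\<close> fixes \<open>\<infinity>\<close> and is increasing on the real line, then the angle of \<open>h (ang t)\<close>
  increases with \<open>t\<close> on the fundamental domain \<open>[0, \<pi>)\<close> (on which \<open>ang t = cot t\<close>
  decreases from \<open>\<infinity>\<close>, and the angle of a real point \<open>y\<close> decreases with \<open>y\<close>).\<close>
lemma angle_of_image_strict_mono:
  assumes "h Infty = Infty" "\<And>x. h (Fin x) = Fin (k x)" "strict_mono k"
    and "0 \<le> a" "a < b" "b < pi"
  shows "rbar_angle (h (ang a)) < rbar_angle (h (ang b))"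
proof (cases "a = 0")
  case True
  then show ?thesis using assms arctan_bounded[of "k (cot b)"] by (simp add: ang_zero ang_cot)
next
  case False
  then have "k (cot b) < k (cot a)"
    using assms cot_strict_decreasing by (simp add: strict_mono_less)
  then show ?thesis using assms False by (simp add: ang_cot arctan_less_iff)
qed

lemma circle_lift_strict_mono:
  assumes "h Infty = Infty" "\<And>x. h (Fin x) = Fin (k x)" "strict_mono k"
  shows "strict_mono (circle_lift h)"
proof (rule strict_monoI)
  have lift_eq:
    "circle_lift h t = rbar_angle (h (ang (t - \<lfloor>t / pi\<rfloor> * pi))) + \<lfloor>t / pi\<rfloor> * pi" for t
    using ang_period[of "t - \<lfloor>t / pi\<rfloor> * pi" "\<lfloor>t / pi\<rfloor>"] by (simp add: circle_lift_def)
  fix a b :: real assume "a < b"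
  then have le: "\<lfloor>a / pi\<rfloor> \<le> \<lfloor>b / pi\<rfloor>" by (intro floor_mono) (simp add: divide_right_mono)
  show "circle_lift h a < circle_lift h b"
  proof (cases "\<lfloor>a / pi\<rfloor> = \<lfloor>b / pi\<rfloor>")
    case True
    then show ?thesis unfolding lift_eq
      using angle_of_image_strict_mono[OF assms, of "a - \<lfloor>a / pi\<rfloor> * pi" "b - \<lfloor>b / pi\<rfloor> * pi"]
        floor_remainder[OF pi_gt_zero, of a] floor_remainder[OF pi_gt_zero, of b] \<open>a < b\<close> by simp
  next
    case False
    then have "of_int (\<lfloor>a / pi\<rfloor> + 1) * pi \<le> \<lfloor>b / pi\<rfloor> * pi"
      using le by (intro mult_right_mono) simp_all
    then show ?thesis unfolding lift_eq
      using rbar_angle_range[of "h (ang (a - \<lfloor>a / pi\<rfloor> * pi))"]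
        rbar_angle_range[of "h (ang (b - \<lfloor>b / pi\<rfloor> * pi))"] by (simp add: algebra_simps)
  qed
qed

text \<open>If a strictly increasing lift \<open>H\<close> maps translates by \<open>\<theta>\<close> to translates by \<open>\<psi>\<close> modulo
  \<open>\<pi>\<close>, with both angles in \<open>(0, \<pi>)\<close>, then it does so exactly: the ambiguity \<open>m \<pi>\<close> must
  vanish because \<open>H (t + \<theta>)\<close> lies strictly between \<open>H t\<close> and \<open>H t + \<pi>\<close>.\<close>
lemma lift_conj_rotation_step:
  fixes H :: "real \<Rightarrow> real"
  assumes "strict_mono H" and per: "\<And>t j. H (t + of_int j * pi) = H t + of_int j * pi"
    and ang_eq: "ang (H (t + \<theta>)) = ang (H t + \<psi>)"
    and "0 < \<theta>" "\<theta> < pi" "0 < \<psi>" "\<psi> < pi"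
  shows "H (t + \<theta>) = H t + \<psi>"
proof -
  obtain m :: int where m: "H (t + \<theta>) = H t + \<psi> + of_int m * pi"
    using ang_eq_imp[OF ang_eq] by blast
  have "H t < H (t + \<theta>)" "H (t + \<theta>) < H (t + of_int 1 * pi)"
    using \<open>strict_mono H\<close> assms(4,5) by (simp_all add: strict_mono_less)
  then have "-1 * pi < of_int m * pi" "of_int m * pi < 1 * pi"
    using m per[of t 1] assms(6,7) by linarith+
  then have "(-1 :: real) < of_int m" "of_int m < (1 :: real)"
    by (simp_all only: mult_less_cancel_right_pos[OF pi_gt_zero])
  then have "m = 0" by linarith
  then show ?thesis using m by simp
qed

text \<open>Its lift conjugates translation by \<open>\<theta>\<close> to translation by \<open>\<psi>\<close>, so the two
  rotation numbers agree and the lift commutes with an irrational translation.\<close>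
lemma rotation_conj_fixing_infty_id:
  assumes "h Infty = Infty" "\<And>x. h (Fin x) = Fin (k x)" "strict_mono k"
    and "0 < \<theta>" "\<theta> < pi" "0 < \<psi>" "\<psi> < pi" and irr: "\<theta> / pi \<notin> \<rat>"
    and conj: "\<And>x. h (rot \<theta> x) = rot \<psi> (h x)"
  shows "h = id"
proof -
  define H where "H = circle_lift h"
  have mono: "strict_mono H" unfolding H_def by (rule circle_lift_strict_mono[OF assms(1-3)])
  have per: "H (t + of_int j * pi) = H t + of_int j * pi" for t j
    unfolding H_def by (rule circle_lift_shift)
  have H0: "H 0 = 0" unfolding H_def by (rule circle_lift_zero[of h, OF assms(1)])
  have step: "H (t + \<theta>) = H t + \<psi>" for t
  proof (rule lift_conj_rotation_step[OF mono per _ assms(4-7)])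
    have "ang (H (t + \<theta>)) = h (rot \<theta> (ang t))" by (simp add: H_def ang_circle_lift rot_ang)
    also have "\<dots> = ang (H t + \<psi>)" by (simp add: conj H_def ang_circle_lift flip: rot_ang)
    finally show "ang (H (t + \<theta>)) = ang (H t + \<psi>)" .
  qed
  note lift = strict_mono_mono[OF mono] H0 pi_gt_zero per
  have "\<psi> = \<theta>" using lift_conj_translation_eq[of H pi, OF lift step] .
  then have "H t = t" for t
    using lift_commuting_irrational_translation_id[of H pi, OF lift _ irr] step by simp
  then have "h (ang t) = id (ang t)" for t
    using ang_circle_lift[of h t] by (simp add: H_def)
  then show ?thesis by (rule fun_eq_on_ang)
qed

section \<open>Conjugacies between irrational rotations\<close>

text \<open>A homeomorphism fixing \<open>\<infinity>\<close> that conjugates an irrational rotation to a rotation (both by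
  angles in \<open>(0, \<pi>)\<close>) is the identity if it preserves the order of the real line, and the
  reflection if it reverses it (then \<open>reflect \<circ> h\<close> conjugates to the rotation by \<open>\<pi> - \<psi>\<close>).\<close>
lemma rotation_conj_fixing_infty:
  assumes cont: "continuous_map rbar_top rbar_top h" and "inj h" and h_infty: "h Infty = Infty"
    and "0 < \<theta>" "\<theta> < pi" "0 < \<psi>" "\<psi> < pi" and irr: "\<theta> / pi \<notin> \<rat>"
    and conj: "\<And>x. h (rot \<theta> x) = rot \<psi> (h x)"
  shows "h = id \<or> h = reflect"
proof -
  obtain k where hk: "\<And>x. h (Fin x) = Fin (k x)"
    and k_mono: "strict_mono k \<or> strict_antimono_on UNIV k"
    using real_restriction_monotone[OF cont \<open>inj h\<close> h_infty] by metis
  show ?thesis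
  proof (cases "strict_mono k")
    case True
    then show ?thesis
      using rotation_conj_fixing_infty_id[of h k, OF h_infty hk True assms(4-9)] by simp
  next
    case False
    then have "strict_mono (\<lambda>x. - k x)" using k_mono by (auto simp: monotone_on_def)
    moreover have "rot (pi - \<psi>) = rot (- \<psi>)" using rot_period[of "- \<psi>" 1] by simp
    then have "(reflect \<circ> h) (rot \<theta> x) = rot (pi - \<psi>) ((reflect \<circ> h) x)" for x
      by (simp add: conj reflect_rot)
    ultimately have "reflect \<circ> h = id"
      using \<open>0 < \<psi>\<close> \<open>\<psi> < pi\<close> hk h_infty
      by (intro rotation_conj_fixing_infty_id[of _ "\<lambda>x. - k x" \<theta> "pi - \<psi>"])
        (simp_all add: assms(4,5) irr)
    then have "h x = reflect x" for x
      using fun_cong[of "reflect \<circ> h" id "reflect x"] by (metis comp_apply id_apply reflect_simps(3))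
    then show ?thesis by auto
  qed
qed

text \<open>Hence any such homeomorphism is linear-fractional: composing with a rotation moves the
  image of \<open>\<infinity>\<close> back to \<open>\<infinity>\<close>.\<close>
lemma rotation_conjugacy_is_lft:
  assumes cont: "continuous_map rbar_top rbar_top h" and "inj h"
    and "0 < \<theta>" "\<theta> < pi" "0 < \<psi>" "\<psi> < pi" and irr: "\<theta> / pi \<notin> \<rat>"
    and conj: "\<And>x. h (rot \<theta> x) = rot \<psi> (h x)"
  shows "is_lft h"
proof -
  obtain \<gamma> where \<gamma>: "h Infty = ang \<gamma>" using ang_surj by blast
  define h1 where "h1 = rot (- \<gamma>) \<circ> h"
  have "continuous_map rbar_top rbar_top h1"
    unfolding h1_def using cont is_lft_continuous[OF is_lft_rot] by (rule continuous_map_compose)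
  moreover have "inj h1"
    unfolding h1_def using is_lft_inj[OF is_lft_rot] \<open>inj h\<close> by (rule inj_compose)
  moreover have "h1 Infty = Infty" by (simp add: h1_def \<gamma> rot_ang ang_zero)
  moreover have "h1 (rot \<theta> x) = rot \<psi> (h1 x)" for x
    by (simp add: h1_def conj rot_add add.commute)
  ultimately have "h1 = id \<or> h1 = reflect"
    using rotation_conj_fixing_infty assms(3-7) by blast
  then have "is_lft h1" using is_lft_id is_lft_reflect by blast
  moreover have "h = rot \<gamma> \<circ> h1" by (auto simp: h1_def rot_add rot_zero)
  ultimately show ?thesis using is_lft_comp is_lft_rot by metis
qed

section \<open>Elliptic linear-fractional maps\<close>

text \<open>A real matrix is elliptic if its characteristic polynomial has negative discriminant,
  i.e. its eigenvalues are non-real.\<close>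
definition elliptic :: "real \<Rightarrow> real \<Rightarrow> real \<Rightarrow> real \<Rightarrow> bool" where
  "elliptic a b c d \<longleftrightarrow> (d - a)^2 + 4 * b * c < 0"

text \<open>For \<open>c \<noteq> 0\<close>, a finite non-pole \<open>y\<close> is fixed by \<open>lft a b c d\<close> iff it solves the quadratic
  equation \<open>c y^2 + (d - a) y - b = 0\<close>, i.e. \<open>(2 c y + d - a)^2 = (d - a)^2 + 4 b c\<close>.\<close>
lemma fixed_point_quadratic:
  assumes "c \<noteq> 0" "c * y + d \<noteq> 0"
  shows "lft a b c d (Fin y) = Fin y \<longleftrightarrow> (2 * c * y + (d - a))^2 = (d - a)^2 + 4 * b * c"
proof -
  have "4 * c * (c * y * y + (d - a) * y - b) = (2 * c * y + (d - a))^2 - ((d - a)^2 + 4 * b * c)"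
    by (simp add: algebra_simps power2_eq_square)
  then have "c * y * y + (d - a) * y - b = 0 \<longleftrightarrow> (2 * c * y + (d - a))^2 = (d - a)^2 + 4 * b * c"
    using assms(1) by auto
  moreover have "a * y + b = y * (c * y + d) \<longleftrightarrow> c * y * y + (d - a) * y - b = 0"
    by algebra
  ultimately show ?thesis using assms(2) by (simp add: divide_eq_eq)
qed

lemma elliptic_no_fixed_point:
  assumes "elliptic a b c d"
  shows "lft a b c d x \<noteq> x"
proof
  assume fixed: "lft a b c d x = x"
  have "c \<noteq> 0" using assms by (auto simp: elliptic_def)
  show False
  proof (cases x)
    case (Fin y)
    then have "c * y + d \<noteq> 0" using fixed by (auto split: if_splits)
    then have "(2 * c * y + (d - a))^2 = (d - a)^2 + 4 * b * c"
      using fixed_point_quadratic[OF \<open>c \<noteq> 0\<close>] fixed Fin by blast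
    then show False using assms unfolding elliptic_def by (metis not_less zero_le_power2)
  qed (use fixed \<open>c \<noteq> 0\<close> in simp)
qed

lemma non_elliptic_fixed_point:
  assumes det: "a * d - b * c \<noteq> 0" and "\<not> elliptic a b c d"
  shows "\<exists>x. lft a b c d x = x"
proof (cases "c = 0")
  case False
  define y where "y = ((a - d) + sqrt ((d - a)^2 + 4 * b * c)) / (2 * c)"
  have "(d - a)^2 + 4 * b * c \<ge> 0" using assms(2) by (simp add: elliptic_def)
  then have root: "(2 * c * y + (d - a))^2 = (d - a)^2 + 4 * b * c"
    using False by (simp add: y_def)
  have "c * y + d \<noteq> 0"
  proof
    assume pole: "c * y + d = 0"
    have "4 * c * (c * y * y + (d - a) * y - b) = (2 * c * y + (d - a))^2 - ((d - a)^2 + 4 * b * c)"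
      by (simp add: algebra_simps power2_eq_square)
    then have "c * y * y + (d - a) * y - b = 0" using root False by simp
    moreover have "a * y + b = y * (c * y + d) - (c * y * y + (d - a) * y - b)" by algebra
    ultimately have "a * y + b = 0" using pole by simp
    moreover have "(a * d - b * c) * y = d * (a * y + b) - b * (c * y + d)" by algebra
    ultimately have "y = 0" using pole det by simp
    then show False using pole \<open>a * y + b = 0\<close> det by simp
  qed
  then show ?thesis using root fixed_point_quadratic[OF False] by blast
qed (intro exI[of _ Infty], simp)

text \<open>An elliptic map is conjugate, by the affine map \<open>x \<mapsto> v x + u\<close> with \<open>u = (a - d) / (2 c)\<close>
  and \<open>v = \<surd>(-D) / (2 \<bar>c\<bar>)\<close>, to the map of a matrix \<open>[[m, -n], [n, m]]\<close>
  (a rotation matrix times \<open>\<surd>(a d - b c)\<close>).\<close>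
lemma elliptic_conj_scaled_rotation:
  assumes "elliptic a b c d"
  obtains g m n where "is_lft g" "n \<noteq> 0" "m = (a + d) / 2" "m^2 + n^2 = a * d - b * c"
    "\<And>x. lft a b c d (g x) = g (lft m (- n) n m x)"
proof -
  define D where "D = (d - a)^2 + 4 * b * c"
  have "D < 0" "c \<noteq> 0" using assms by (auto simp: elliptic_def D_def)
  define u where "u = (a - d) / (2 * c)"
  define v where "v = sqrt (- D) / (2 * \<bar>c\<bar>)"
  define m where "m = (a + d) / 2"
  define n where "n = c * v"
  have "v > 0" unfolding v_def using \<open>D < 0\<close> \<open>c \<noteq> 0\<close> by simp
  have cvv: "c * v * v = - D / (4 * c)"
    unfolding v_def using \<open>D < 0\<close> \<open>c \<noteq> 0\<close> by (simp add: field_simps flip: power2_eq_square)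
  have "a * v = v * m + u * n" "c * u + d = m"
    unfolding m_def n_def u_def using \<open>c \<noteq> 0\<close> by (simp_all add: field_simps)
  moreover have "a * u + b = v * (- n) + u * m"
    using cvv \<open>c \<noteq> 0\<close> unfolding n_def m_def u_def D_def
    by (simp add: field_simps power2_eq_square) algebra
  moreover have mn: "m^2 + n^2 = a * d - b * c"
    using cvv \<open>c \<noteq> 0\<close> unfolding n_def m_def D_def by (simp add: field_simps power2_eq_square)
  moreover have "n \<noteq> 0" unfolding n_def using \<open>c \<noteq> 0\<close> \<open>v > 0\<close> by simp
  moreover have "c * v = n" unfolding n_def ..
  ultimately have "lft a b c d (lft v u 0 1 x) = lft v u 0 1 (lft m (- n) n m x)" for x
    using \<open>v > 0\<close> sum_power2_gt_zero_iff[of m n]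
    by (simp add: lft_comp power2_eq_square flip: mn)
  moreover have "is_lft (lft v u 0 1)" unfolding is_lft_def using \<open>v > 0\<close> by force
  ultimately show thesis using that mn \<open>n \<noteq> 0\<close> m_def by blast
qed

lemma scaled_rotation_is_rot:
  assumes "n \<noteq> 0"
  obtains \<beta> where "lft m (- n) n m = rot \<beta>" "sin \<beta> \<noteq> 0" "(cos \<beta>)^2 * (m^2 + n^2) = m^2"
proof -
  define r where "r = sqrt (m^2 + n^2)"
  have "r > 0" unfolding r_def using assms sum_power2_gt_zero_iff[of m n] by simp
  then have "(m / r)^2 + (n / r)^2 = 1"
    using assms unfolding r_def by (simp add: power_divide add_divide_distrib [symmetric])
  then obtain \<beta> where \<beta>: "m / r = cos \<beta>" "n / r = sin \<beta>" using sincos_total_2pi by metis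
  then have "m = r * cos \<beta>" "n = r * sin \<beta>" using \<open>r > 0\<close> by (simp_all add: field_simps)
  then have "lft m (- n) n m = lft (r * cos \<beta>) (r * (- sin \<beta>)) (r * sin \<beta>) (r * cos \<beta>)" by simp
  also have "\<dots> = rot \<beta>" unfolding rot_def by (rule lft_scale) (use \<open>r > 0\<close> in simp)
  finally have "lft m (- n) n m = rot \<beta>" .
  moreover have "sin \<beta> \<noteq> 0" using \<beta>(2) assms \<open>r > 0\<close> by auto
  moreover have "r^2 = m^2 + n^2" unfolding r_def by simp
  then have "(cos \<beta>)^2 * (m^2 + n^2) = m^2"
    using \<open>r > 0\<close> by (simp add: \<beta>(1)[symmetric] power_divide)
  ultimately show thesis using that by blast
qed

lemma elliptic_conj_rotation:
  assumes "elliptic a b c d"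
  obtains g \<theta> where "is_lft g" "0 < \<theta>" "\<theta> < pi"
    "(cos \<theta>)^2 * (a * d - b * c) = ((a + d) / 2)^2" "\<And>x. lft a b c d (g x) = g (rot \<theta> x)"
proof -
  obtain g n m where g: "is_lft g" "n \<noteq> 0" "m = (a + d) / 2" "m^2 + n^2 = a * d - b * c"
    and conj: "\<And>x. lft a b c d (g x) = g (lft m (- n) n m x)"
    using elliptic_conj_scaled_rotation[OF assms] by metis
  obtain \<beta> where \<beta>: "lft m (- n) n m = rot \<beta>" "sin \<beta> \<noteq> 0" "(cos \<beta>)^2 * (m^2 + n^2) = m^2"
    using scaled_rotation_is_rot[OF g(2)] by blast
  obtain \<theta> k where \<theta>: "0 < \<theta>" "\<theta> < pi" "rot \<theta> = rot \<beta>" "\<theta> = \<beta> + of_int k * pi"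
    using rot_normalize[OF \<beta>(2)] by blast
  have "sin (of_int k * pi) = 0" by (simp add: sin_zero_iff_int2)
  then have "(cos (of_int k * pi))^2 = 1" using sin_cos_squared_add[of "of_int k * pi"] by simp
  then have "(cos \<theta>)^2 = (cos \<beta>)^2"
    using \<open>sin (of_int k * pi) = 0\<close> by (simp add: \<theta>(4) cos_add power_mult_distrib)
  then show thesis using that g \<beta> \<theta> conj by metis
qed

text \<open>If \<open>cos \<theta> = \<plusminus> cos \<alpha>\<close>, then \<open>\<theta> \<equiv> \<plusminus>\<alpha>\<close> modulo \<open>\<pi>\<close>, so \<open>\<theta> / \<pi>\<close> is irrational along
  with \<open>\<alpha> / \<pi>\<close>.\<close>
lemma cos_square_eq_irrational:
  assumes "(cos \<theta>)^2 = (cos \<alpha>)^2" and irr: "\<alpha> / pi \<notin> \<rat>"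
  shows "\<theta> / pi \<notin> \<rat>"
proof
  assume rat: "\<theta> / pi \<in> \<rat>"
  have "sin (\<alpha> + \<theta>) * sin (\<alpha> - \<theta>) = (sin \<alpha>)^2 * (cos \<theta>)^2 - (cos \<alpha>)^2 * (sin \<theta>)^2"
    by (simp add: sin_add sin_diff algebra_simps power2_eq_square)
  also have "\<dots> = (cos \<theta>)^2 - (cos \<alpha>)^2"
    by (simp add: sin_squared_eq algebra_simps)
  finally have "sin (\<alpha> + \<theta>) = 0 \<or> sin (\<alpha> - \<theta>) = 0" using assms(1) by simp
  then obtain k :: int where "\<alpha> + \<theta> = of_int k * pi \<or> \<alpha> - \<theta> = of_int k * pi"
    using sin_zero_iff_int2 by metis
  then have "\<alpha> / pi = of_int k - \<theta> / pi \<or> \<alpha> / pi = of_int k + \<theta> / pi"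
    by (auto simp: field_simps)
  then have "\<alpha> / pi \<in> \<rat>" using rat by auto
  then show False using irr by contradiction
qed

section \<open>Matrices with an irrational rotation eigenvalue\<close>

lemma complex_eigenvalue_char_poly:
  fixes P :: "real^2^2"
  assumes "complex_eigenvalue P z"
  defines "a \<equiv> complex_of_real (P$1$1)" and "b \<equiv> complex_of_real (P$1$2)"
    and "c \<equiv> complex_of_real (P$2$1)" and "d \<equiv> complex_of_real (P$2$2)"
  shows "(a - z) * (d - z) - b * c = 0"
proof -
  obtain v :: "complex^2" where v: "v \<noteq> 0" "(\<chi> i j. complex_of_real (P$i$j)) *v v = z *s v"
    using assms unfolding complex_eigenvalue_def by blast
  have e1: "a * v$1 + b * v$2 = z * v$1" and e2: "c * v$1 + d * v$2 = z * v$2"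
    using arg_cong[OF v(2), of "\<lambda>w. w$1"] arg_cong[OF v(2), of "\<lambda>w. w$2"]
    by (simp_all add: a_def b_def c_def d_def matrix_vector_mult_def sum_2)
  have "((a - z) * (d - z) - b * c) * v$1 = (d - z) * (a * v$1 + b * v$2 - z * v$1) - b * (c * v$1 + d * v$2 - z * v$2)"
       "((a - z) * (d - z) - b * c) * v$2 = (a - z) * (c * v$1 + d * v$2 - z * v$2) - c * (a * v$1 + b * v$2 - z * v$1)"
    by algebra+
  moreover have "v$1 \<noteq> 0 \<or> v$2 \<noteq> 0" using v(1) by (auto simp: vec_eq_iff forall_2)
  ultimately show ?thesis using e1 e2 by auto
qed

lemma unit_eigenvalue_trace_det:
  fixes P :: "real^2^2"
  assumes ev: "complex_eigenvalue P (Complex (cos \<alpha>) (sin \<alpha>))" and "sin \<alpha> \<noteq> 0"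
  shows "P$1$1 + P$2$2 = 2 * cos \<alpha>" "P$1$1 * P$2$2 - P$1$2 * P$2$1 = 1"
proof -
  let ?D = "(complex_of_real (P$1$1) - Complex (cos \<alpha>) (sin \<alpha>)) *
     (complex_of_real (P$2$2) - Complex (cos \<alpha>) (sin \<alpha>)) - complex_of_real (P$1$2) * complex_of_real (P$2$1)"
  have "?D = 0" using complex_eigenvalue_char_poly[OF ev] by simp
  then have re: "Re ?D = 0" and im: "Im ?D = 0" by simp_all
  from im have "sin \<alpha> * (2 * cos \<alpha> - P$1$1 - P$2$2) = 0" by (simp add: algebra_simps)
  then show tr: "P$1$1 + P$2$2 = 2 * cos \<alpha>" using \<open>sin \<alpha> \<noteq> 0\<close> by simp
  from re have "P$1$1 * P$2$2 - cos \<alpha> * (P$1$1 + P$2$2) + (cos \<alpha>)^2 - (sin \<alpha>)^2 - P$1$2 * P$2$1 = 0"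
    by (simp add: algebra_simps power2_eq_square)
  then show "P$1$1 * P$2$2 - P$1$2 * P$2$1 = 1"
    using tr sin_cos_squared_add[of \<alpha>] by (simp add: power2_eq_square)
qed

lemma irrational_eigenvalue_normal_form:
  fixes P :: "real^2^2"
  assumes ev: "complex_eigenvalue P (Complex (cos \<alpha>) (sin \<alpha>))" and irr: "\<alpha> / pi \<notin> \<rat>"
  shows "elliptic (P$1$1) (P$1$2) (P$2$1) (P$2$2)"
    and "\<exists>g \<theta>. is_lft g \<and> 0 < \<theta> \<and> \<theta> < pi \<and> \<theta> / pi \<notin> \<rat> \<and> (\<forall>x. mat_act P (g x) = g (rot \<theta> x))"
proof -
  have "sin \<alpha> \<noteq> 0"
  proof
    assume "sin \<alpha> = 0"
    then obtain i :: int where "\<alpha> = of_int i * pi" using sin_zero_iff_int2 by metis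
    then show False using irr by simp
  qed
  note tr = unit_eigenvalue_trace_det(1)[OF ev this] and det = unit_eigenvalue_trace_det(2)[OF ev this]
  have "(P$2$2 - P$1$1)^2 + 4 * P$1$2 * P$2$1 = (P$1$1 + P$2$2)^2 - 4 * (P$1$1 * P$2$2 - P$1$2 * P$2$1)"
    by algebra
  also have "\<dots> = - 4 * (sin \<alpha>)^2" using tr det sin_cos_squared_add[of \<alpha>] by (simp add: power2_eq_square)
  finally show ell: "elliptic (P$1$1) (P$1$2) (P$2$1) (P$2$2)"
    unfolding elliptic_def using \<open>sin \<alpha> \<noteq> 0\<close> by simp
  obtain g \<theta> where "is_lft g" "0 < \<theta>" "\<theta> < pi"
    and cos: "(cos \<theta>)^2 * (P$1$1 * P$2$2 - P$1$2 * P$2$1) = ((P$1$1 + P$2$2) / 2)^2"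
    and "\<And>x. lft (P$1$1) (P$1$2) (P$2$1) (P$2$2) (g x) = g (rot \<theta> x)"
    using elliptic_conj_rotation[OF ell] by blast
  moreover have "\<theta> / pi \<notin> \<rat>"
    using cos tr det irr by (intro cos_square_eq_irrational[of \<theta> \<alpha>]) simp_all
  ultimately show "\<exists>g \<theta>. is_lft g \<and> 0 < \<theta> \<and> \<theta> < pi \<and> \<theta> / pi \<notin> \<rat> \<and> (\<forall>x. mat_act P (g x) = g (rot \<theta> x))"
    unfolding mat_act_def by blast
qed

section \<open>Topological conjugacies between elliptic maps\<close>

lemma rbar_homeomorphism_bij: "homeomorphic_map rbar_top rbar_top f \<Longrightarrow> bij f"
  using homeomorphic_imp_injective_map homeomorphic_imp_surjective_map
  by (fastforce simp: topspace_rbar bij_def)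

text \<open>A topological conjugacy \<open>f\<close> between two self-maps of the projective line carries fixed
  points to fixed points, so it preserves the absence of fixed points.\<close>
lemma conjugate_fixed_point_free:
  assumes "bij f" "\<And>x. f (T x) = U (f x)" "\<And>x. T x \<noteq> x"
  shows "U y \<noteq> y"
proof
  assume "U y = y"
  obtain x where "y = f x" using \<open>bij f\<close> by (metis bij_pointE)
  then have "f (T x) = f x" using assms(2) \<open>U y = y\<close> by simp
  then show False using assms(1,3) by (metis bij_pointE)
qed

lemma rotation_conjugate_homeomorphism_is_lft:
  assumes hom: "homeomorphic_map rbar_top rbar_top f" and conj: "\<And>x. f (T x) = U (f x)"
    and "is_lft A" and TA: "\<And>x. T (A x) = A (rot \<theta> x)"
    and "is_lft B" and UB: "\<And>x. U (B x) = B (rot \<psi> x)"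
    and "0 < \<theta>" "\<theta> < pi" "0 < \<psi>" "\<psi> < pi" "\<theta> / pi \<notin> \<rat>"
  shows "is_lft f"
proof -
  obtain A' where A': "is_lft A'" "\<And>x. A' (A x) = x" "\<And>x. A (A' x) = x"
    using is_lft_inverse[OF \<open>is_lft A\<close>] by blast
  obtain B' where B': "is_lft B'" "\<And>x. B' (B x) = x" "\<And>x. B (B' x) = x"
    using is_lft_inverse[OF \<open>is_lft B\<close>] by blast
  define h where "h = B' \<circ> f \<circ> A"
  have "is_lft h"
  proof (rule rotation_conjugacy_is_lft)
    show "continuous_map rbar_top rbar_top h" unfolding h_def
      using is_lft_continuous[OF \<open>is_lft A\<close>] homeomorphic_imp_continuous_map[OF hom]
        is_lft_continuous[OF B'(1)] by (intro continuous_map_compose)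
    show "inj h" unfolding h_def
      using is_lft_inj[OF B'(1)] bij_is_inj[OF rbar_homeomorphism_bij[OF hom]]
        is_lft_inj[OF \<open>is_lft A\<close>] by (simp add: inj_compose)
    show "h (rot \<theta> x) = rot \<psi> (h x)" for x
    proof -
      have "h (rot \<theta> x) = B' (f (T (A x)))" by (simp add: h_def TA)
      also have "\<dots> = B' (U (B (B' (f (A x)))))" by (simp add: conj B'(3))
      also have "\<dots> = rot \<psi> (h x)" by (simp add: h_def UB B'(2))
      finally show ?thesis .
    qed
  qed (use assms in simp_all)
  moreover have "f = B \<circ> h \<circ> A'" by (auto simp: h_def A' B')
  ultimately show ?thesis using is_lft_comp \<open>is_lft B\<close> A'(1) by metis
qed

theorem theorem12p6:
  fixes P1 Q1 :: "real^2^2" and \<alpha> :: real and f :: "rbar \<Rightarrow> rbar"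
  assumes "invertible P1" and "invertible Q1"
    and "complex_eigenvalue P1 (Complex (cos \<alpha>) (sin \<alpha>))"
    and "complex_eigenvalue P1 (Complex (cos \<alpha>) (- sin \<alpha>))"
    and "- (pi / 2) < \<alpha>" and "\<alpha> \<le> pi / 2"
    and "\<alpha> / pi \<notin> \<rat>"
    and "homeomorphic_map rbar_top rbar_top f"
    and "\<forall>x. f (mat_act P1 x) = mat_act Q1 (f x)"
  shows "\<exists>a b c d :: real. a * d - b * c \<noteq> 0 \<and> (\<forall>x. f x = lft a b c d x)"
proof -
  note hom = assms(8) and conj = assms(9)[rule_format]
  obtain A \<theta> where A: "is_lft A" "0 < \<theta>" "\<theta> < pi" "\<theta> / pi \<notin> \<rat>"
    "\<And>x. mat_act P1 (A x) = A (rot \<theta> x)"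
    using irrational_eigenvalue_normal_form(2)[OF assms(3,7)] by blast
  have "mat_act P1 x \<noteq> x" for x
    using elliptic_no_fixed_point irrational_eigenvalue_normal_form(1)[OF assms(3,7)]
    unfolding mat_act_def by blast
  \<comment> \<open>Hence its topological conjugate \<open>Q1\<close> has no fixed points either, so it is elliptic.\<close>
  then have "mat_act Q1 y \<noteq> y" for y
    using conjugate_fixed_point_free[of f "mat_act P1" "mat_act Q1"]
      rbar_homeomorphism_bij[OF hom] conj by blast
  moreover have "Q1$1$1 * Q1$2$2 - Q1$1$2 * Q1$2$1 \<noteq> 0"
    using assms(2) invertible_det_nz det_2 by metis
  ultimately have "elliptic (Q1$1$1) (Q1$1$2) (Q1$2$1) (Q1$2$2)"
    using non_elliptic_fixed_point unfolding mat_act_def by blast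
  then obtain B \<psi> where B: "is_lft B" "0 < \<psi>" "\<psi> < pi" "\<And>x. mat_act Q1 (B x) = B (rot \<psi> x)"
    unfolding mat_act_def by (elim elliptic_conj_rotation) blast
  have "is_lft f" using hom conj A B
    by (intro rotation_conjugate_homeomorphism_is_lft[of f "mat_act P1" "mat_act Q1" A \<theta> B \<psi>])
  then show ?thesis unfolding is_lft_def by metis
qed

end
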